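(* Assume $\sigma_1\equiv0$. Fix $(t,x,y)$ and suppose $u\mapsto\Psi_{t,x,y}(u):=m(t,y,u)+\frac{\mu(t,y)^2-\sigma(t,y,u)^2\sigma_2(t,y)^2A(x)^2}{2\sigma_2(t,y)^2A(x)}$ is strictly concave on $[0,I]$. Then the optimal reinsurance strategy (the maximiser of $\Psi_{t,x,y}$ over $[0,I]$) is $$u^*(t,x,y)=\begin{cases}0,&(t,x,y)\in A_0,\\ \hat u(t,x,y),&(t,x,y)\in[0,T]\times\mathbb R^2\setminus(A_0\cup A_I),\\ I,&(t,x,y)\in A_I,\end{cases}$$ where $A_0=\{(t,x,y): \frac{\partial m}{\partial u}(t,y,0)\le A(x)\sigma(t,y,0)\frac{\partial\sigma}{\partial u}(t,y,0)\}$, $A_I=\{(t,x,y): \frac{\partial m}{\partial u}(t,y,I)\ge A(x)\sigma(t,y,I)\frac{\partial\sigma}{\partial u}(t,y,I)\}$, and $\hat u(t,x,y)$ is the unique solution $u$ of $\frac{\partial m}{\partial u}(t,y,u)=A(x)\sigma(t,y,u)\frac{\partial\sigma}{\partial u}(t,y,u)$.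
   Context: $I\in(0,\infty]$; $m(t,y,u)$ and $\sigma(t,y,u)$, $u\in[0,I]$, are continuously differentiable drift and volatility of the insurer's surplus under retention level $u$; $\mu(t,y),\sigma_2(t,y)>0$ are the drift and the (independent) volatility of the risky asset, and the risky asset's loading $\sigma_1$ on the insurance Brownian motion is zero (conditionally independent markets). The insurer's surplus with investment $a_t$ is $dX_t=\{m(t,Y_t,u_t)+a_t\mu(t,Y_t)\}dt+\sigma(t,Y_t,u_t)dW^1_t+a_t\sigma_2(t,Y_t)dW^2_t$, and $\Psi_{t,x,y}$ is the function to be maximised in the HJB equation under the ansatz $V(t,x,y)=U(x)\tilde V(t,y)$. $U$ is a SAHARA utility: $A(x):=-U''(x)/U'(x)=\alpha/\sqrt{b^2+(x-d)^2}$, $\alpha>0$, $b>0$, $d\in\mathbb R$. *)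

theory Defs
  imports "HOL-Analysis.Analysis"
begin

definition sahara_A :: "real \<Rightarrow> real \<Rightarrow> real \<Rightarrow> real \<Rightarrow> real" where
  "sahara_A \<alpha> b d x = \<alpha> / sqrt (b\<^sup>2 + (x - d)\<^sup>2)"

definition strictly_concave_on :: "real set \<Rightarrow> (real \<Rightarrow> real) \<Rightarrow> bool" where
  "strictly_concave_on S f \<longleftrightarrow>
     (\<forall>x\<in>S. \<forall>y\<in>S. x \<noteq> y \<longrightarrow> (\<forall>c::real. 0 < c \<and> c < 1 \<longrightarrow>
        f (c * x + (1 - c) * y) > c * f x + (1 - c) * f y))"

definition retention_set :: "ereal \<Rightarrow> real set" where
  "retention_set I = {u. 0 \<le> u \<and> ereal u \<le> I}"

definition Psi :: "(real \<Rightarrow> real \<Rightarrow> real \<Rightarrow> real) \<Rightarrow> (real \<Rightarrow> real \<Rightarrow> real \<Rightarrow> real)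
    \<Rightarrow> (real \<Rightarrow> real \<Rightarrow> real) \<Rightarrow> (real \<Rightarrow> real \<Rightarrow> real) \<Rightarrow> (real \<Rightarrow> real)
    \<Rightarrow> real \<Rightarrow> real \<Rightarrow> real \<Rightarrow> real \<Rightarrow> real" where
  "Psi m \<sigma> \<mu> \<sigma>\<^sub>2 A t x y u =
     m t y u + ((\<mu> t y)\<^sup>2 - (\<sigma> t y u)\<^sup>2 * (\<sigma>\<^sub>2 t y)\<^sup>2 * (A x)\<^sup>2) / (2 * (\<sigma>\<^sub>2 t y)\<^sup>2 * A x)"

definition is_maximiser_on :: "real set \<Rightarrow> (real \<Rightarrow> real) \<Rightarrow> real \<Rightarrow> bool" where
  "is_maximiser_on S f u \<longleftrightarrow> u \<in> S \<and> (\<forall>v\<in>S. f v \<le> f u)"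

end

theory Submission
  imports Defs
begin

text \<open>
  Differentiating \<open>\<Psi>\<close> in \<open>u\<close> gives \<open>\<Psi>'(u) = m\<^sub>u - A(x) \<sigma> \<sigma>\<^sub>u\<close>, so the first-order
  condition is \<open>\<Psi>'(u) = 0\<close> and the sets \<open>A\<^sub>0\<close>, \<open>A\<^sub>I\<close> are \<open>\<Psi>'(0) \<le> 0\<close> and
  \<open>\<Psi>'(I) \<ge> 0\<close>. Strict concavity gives the strict tangent inequality
  \<open>\<Psi>(v) < \<Psi>(u) + \<Psi>'(u)(v - u)\<close> for \<open>v \<noteq> u\<close>, so any \<open>u\<close> with \<open>\<Psi>'(u)(v - u) \<le> 0\<close>
  for all admissible \<open>v\<close> is the unique maximiser: this covers \<open>u = 0\<close> on \<open>A\<^sub>0\<close>,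
  \<open>u = I\<close> on \<open>A\<^sub>I\<close> and every zero of \<open>\<Psi>'\<close>. Outside \<open>A\<^sub>0 \<union> A\<^sub>I\<close> a maximiser can sit at
  neither endpoint, so \<open>\<Psi>'\<close> vanishes there; for finite \<open>I\<close> a zero of the continuous
  \<open>\<Psi>'\<close> exists by the intermediate value theorem.
\<close>

lemma strictly_concave_on_imp_concave_on:
  assumes "strictly_concave_on S f" and "convex S"
  shows "concave_on S f"
proof (rule concave_on_linorderI)
  fix t x y :: real
  assume "0 < t" "t < 1" "x \<in> S" "y \<in> S" "x < y"
  then have chord: "\<forall>c. 0 < c \<and> c < 1 \<longrightarrow> c * f x + (1 - c) * f y < f (c * x + (1 - c) * y)"
    using assms(1) unfolding strictly_concave_on_def by (simp add: less_imp_neq)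
  have "(1 - t) * f x + t * f y < f ((1 - t) * x + t * y)"
    using spec[OF chord, of "1 - t"] \<open>0 < t\<close> \<open>t < 1\<close> by simp
  then show "(1 - t) * f x + t * f y \<le> f ((1 - t) *\<^sub>R x + t *\<^sub>R y)" by simp
qed (fact assms(2))

lemma concave_on_le_tangent:
  fixes f :: "real \<Rightarrow> real"
  assumes conc: "concave_on S f" and a: "a \<in> S" and z: "z \<in> S"
    and der: "(f has_real_derivative D) (at a within S)"
  shows "f z \<le> f a + D * (z - a)"
proof -
  define g where "g c = a + c * (z - a)" for c
  have segment: "g ` {0..1} \<subseteq> S"
    using convexD_alt[OF concave_on_imp_convex[OF conc] a z]
    by (auto simp: g_def algebra_simps)
  have "(f \<circ> g has_real_derivative D * (z - a)) (at 0 within {0..1})"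
  proof (rule DERIV_image_chain)
    show "(f has_real_derivative D) (at (g 0) within g ` {0..1})"
      using has_field_derivative_subset[OF der segment] by (simp add: g_def)
    show "(g has_real_derivative z - a) (at 0 within {0..1})"
      unfolding g_def by (auto intro!: derivative_eq_intros)
  qed
  then have lim: "((\<lambda>c. (f (g c) - f a) / c) \<longlongrightarrow> D * (z - a)) (at_right 0)"
    by (simp add: has_field_derivative_iff at_within_Icc_at_right g_def)
  have "\<forall>\<^sub>F c in at_right 0. f z - f a \<le> (f (g c) - f a) / c"
  proof -
    have "\<forall>\<^sub>F c in at_right (0::real). 0 < c \<and> c < 1"
      by (simp add: eventually_at_right_field) (auto intro!: exI[of _ 1])
    then show ?thesis
    proof (rule eventually_mono)
      fix c :: real assume c: "0 < c \<and> c < 1"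
      have "c * f z + (1 - c) * f a \<le> f (g c)"
        using concave_onD[OF conc, of c a z] c a z by (simp add: g_def algebra_simps)
      then show "f z - f a \<le> (f (g c) - f a) / c"
        using c by (simp add: field_simps)
    qed
  qed
  then have "f z - f a \<le> D * (z - a)"
    by (rule tendsto_lowerbound[OF lim]) simp
  then show ?thesis by simp
qed

lemma strictly_concave_on_less_tangent:
  fixes f :: "real \<Rightarrow> real"
  assumes sc: "strictly_concave_on S f" and "convex S"
    and a: "a \<in> S" and z: "z \<in> S" and "z \<noteq> a"
    and der: "(f has_real_derivative D) (at a within S)"
  shows "f z < f a + D * (z - a)"
proof -
  define w where "w = (1/2) * z + (1/2) * a"
  have "w \<in> S"
    using convexD_alt[OF \<open>convex S\<close> z a, of "1/2"] by (simp add: w_def)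
  have chord: "\<forall>c. 0 < c \<and> c < 1 \<longrightarrow> c * f z + (1 - c) * f a < f (c * z + (1 - c) * a)"
    using sc z a \<open>z \<noteq> a\<close> unfolding strictly_concave_on_def by simp
  have "(1/2) * f z + (1/2) * f a < f w"
    using spec[OF chord, of "1/2"] by (simp add: w_def)
  also have "f w \<le> f a + D * (w - a)"
    using concave_on_le_tangent[OF strictly_concave_on_imp_concave_on[OF sc \<open>convex S\<close>] a \<open>w \<in> S\<close> der] .
  finally show ?thesis by (simp add: w_def algebra_simps)
qed

lemma strictly_concave_on_maximiser_iff:
  fixes f :: "real \<Rightarrow> real"
  assumes "strictly_concave_on S f" and "convex S" and "a \<in> S"
    and "(f has_real_derivative D) (at a within S)"
    and tangent_nonpos: "\<And>v. v \<in> S \<Longrightarrow> D * (v - a) \<le> 0"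
  shows "is_maximiser_on S f u \<longleftrightarrow> u = a"
proof -
  have below: "f v < f a" if "v \<in> S" "v \<noteq> a" for v
    using strictly_concave_on_less_tangent[OF assms(1-3) that assms(4)] tangent_nonpos[OF \<open>v \<in> S\<close>]
    by linarith
  have "f v \<le> f a" if "v \<in> S" for v
    using below[OF that] by (cases "v = a") auto
  then have "is_maximiser_on S f a"
    using \<open>a \<in> S\<close> by (simp add: is_maximiser_on_def)
  moreover have "u = a" if "is_maximiser_on S f u"
  proof (rule ccontr)
    assume "u \<noteq> a"
    then have "f u < f a" using below that by (simp add: is_maximiser_on_def)
    moreover have "f a \<le> f u" using that \<open>a \<in> S\<close> by (simp add: is_maximiser_on_def)
    ultimately show False by simp
  qed
  ultimately show ?thesis by blast
qed

lemma is_maximiser_on_deriv_nonpos: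
  fixes f :: "real \<Rightarrow> real"
  assumes max: "is_maximiser_on S f u" and "convex S"
    and der: "(f has_real_derivative D) (at u within S)"
    and "v \<in> S" and "u < v"
  shows "D \<le> 0"
proof (rule ccontr)
  assume "\<not> D \<le> 0"
  then have "0 < D" by simp
  then obtain d where "0 < d"
    and increasing: "\<And>h. 0 < h \<Longrightarrow> u + h \<in> S \<Longrightarrow> h < d \<Longrightarrow> f u < f (u + h)"
    using has_real_derivative_pos_inc_right[OF der] by blast
  define h where "h = min (d / 2) (v - u)"
  have "0 < h" "h < d" "u + h \<le> v" using \<open>0 < d\<close> \<open>u < v\<close> by (auto simp: h_def)
  have "u \<in> S" using max by (simp add: is_maximiser_on_def)
  have "is_interval S" using \<open>convex S\<close> by (simp add: is_interval_convex_1)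
  then have "u + h \<in> S"
    using mem_is_interval_1_I[of S u v] \<open>u \<in> S\<close> \<open>v \<in> S\<close> \<open>0 < h\<close> \<open>u + h \<le> v\<close> by simp
  then have "f u < f (u + h)" using increasing \<open>0 < h\<close> \<open>h < d\<close> by blast
  moreover have "f (u + h) \<le> f u" using max \<open>u + h \<in> S\<close> by (simp add: is_maximiser_on_def)
  ultimately show False by simp
qed

lemma is_maximiser_on_deriv_nonneg:
  fixes f :: "real \<Rightarrow> real"
  assumes max: "is_maximiser_on S f u" and "convex S"
    and der: "(f has_real_derivative D) (at u within S)"
    and "v \<in> S" and "v < u"
  shows "0 \<le> D"
proof (rule ccontr)
  assume "\<not> 0 \<le> D"
  then have "D < 0" by simp
  then obtain d where "0 < d"
    and decreasing: "\<And>h. 0 < h \<Longrightarrow> u - h \<in> S \<Longrightarrow> h < d \<Longrightarrow> f u < f (u - h)"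
    using has_real_derivative_neg_dec_left[OF der] by blast
  define h where "h = min (d / 2) (u - v)"
  have "0 < h" "h < d" "v \<le> u - h" using \<open>0 < d\<close> \<open>v < u\<close> by (auto simp: h_def)
  have "u \<in> S" using max by (simp add: is_maximiser_on_def)
  have "is_interval S" using \<open>convex S\<close> by (simp add: is_interval_convex_1)
  then have "u - h \<in> S"
    using mem_is_interval_1_I[of S v u] \<open>u \<in> S\<close> \<open>v \<in> S\<close> \<open>0 < h\<close> \<open>v \<le> u - h\<close> by simp
  then have "f u < f (u - h)" using decreasing \<open>0 < h\<close> \<open>h < d\<close> by blast
  moreover have "f (u - h) \<le> f u" using max \<open>u - h \<in> S\<close> by (simp add: is_maximiser_on_def)
  ultimately show False by simp
qed

lemma retention_set_ereal [simp]: "retention_set (ereal r) = {0..r}"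
  by (auto simp: retention_set_def)

lemma retention_set_PInf [simp]: "retention_set \<infinity> = {0..}"
  by (auto simp: retention_set_def)

lemma retention_set_nonneg: "u \<in> retention_set I \<Longrightarrow> 0 \<le> u"
  by (simp add: retention_set_def)

lemma zero_in_retention_set: "0 \<le> I \<Longrightarrow> 0 \<in> retention_set I"
  by (simp add: retention_set_def zero_ereal_def[symmetric])

lemma convex_retention_set: "convex (retention_set I)"
proof (cases I)
  case MInf
  then show ?thesis by (simp add: retention_set_def)
qed simp_all

locale concave_retention_problem =
  fixes I :: ereal and f D :: "real \<Rightarrow> real"
  assumes I_pos: "0 < I"
    and strictly_concave: "strictly_concave_on (retention_set I) f"
    and has_real_derivative_D:
      "\<And>u. u \<in> retention_set I \<Longrightarrow> (f has_real_derivative D u) (at u within retention_set I)"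
    and continuous_on_D: "continuous_on (retention_set I) D"
begin

abbreviation U :: "real set" where "U \<equiv> retention_set I"

lemma maximiser_iff_eq:
  assumes "a \<in> U" and "\<And>v. v \<in> U \<Longrightarrow> D a * (v - a) \<le> 0"
  shows "is_maximiser_on U f u \<longleftrightarrow> u = a"
  using strictly_concave_on_maximiser_iff[OF strictly_concave convex_retention_set
      assms(1) has_real_derivative_D[OF assms(1)] assms(2)] .

lemma maximiser_zero_iff:
  assumes "D 0 \<le> 0"
  shows "is_maximiser_on U f u \<longleftrightarrow> u = 0"
proof (rule maximiser_iff_eq)
  show "0 \<in> U" using I_pos by (simp add: zero_in_retention_set)
  show "D 0 * (v - 0) \<le> 0" if "v \<in> U" for v
    using assms retention_set_nonneg[OF that] by (simp add: mult_nonpos_nonneg)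
qed

lemma maximiser_cap_iff:
  assumes "I = ereal r" and "0 \<le> D r"
  shows "is_maximiser_on U f u \<longleftrightarrow> u = r"
proof (rule maximiser_iff_eq)
  show "r \<in> U" using I_pos assms(1) by simp
  show "D r * (v - r) \<le> 0" if "v \<in> U" for v
    using assms that by (simp add: mult_nonneg_nonpos)
qed

lemma stationary_unique:
  assumes "u\<^sub>1 \<in> U" "u\<^sub>2 \<in> U" "D u\<^sub>1 = 0" "D u\<^sub>2 = 0"
  shows "u\<^sub>1 = u\<^sub>2"
proof -
  have "is_maximiser_on U f u\<^sub>2 \<longleftrightarrow> u\<^sub>2 = u\<^sub>1"
    by (rule maximiser_iff_eq) (simp_all add: assms)
  moreover have "is_maximiser_on U f u\<^sub>2 \<longleftrightarrow> u\<^sub>2 = u\<^sub>2"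
    by (rule maximiser_iff_eq) (simp_all add: assms)
  ultimately show ?thesis by simp
qed

lemma stationary_exists:
  assumes "I = ereal r" and "0 < D 0" and "D r < 0"
  shows "\<exists>u\<in>U. D u = 0"
proof -
  have "0 \<le> r" using assms(1) I_pos by simp
  moreover have "continuous_on {0..r} D" using continuous_on_D assms(1) by simp
  ultimately have "\<exists>u. 0 \<le> u \<and> u \<le> r \<and> D u = 0"
    using assms(2,3) by (intro IVT2') simp_all
  then show ?thesis using assms(1) by auto
qed

lemma maximiser_iff_stationary:
  assumes D0: "0 < D 0" and Dcap: "\<And>r. I = ereal r \<Longrightarrow> D r < 0"
  shows "is_maximiser_on U f u \<longleftrightarrow> u \<in> U \<and> D u = 0"
proof
  assume "u \<in> U \<and> D u = 0"
  then show "is_maximiser_on U f u" using maximiser_iff_eq[of u u] by simp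
next
  assume max: "is_maximiser_on U f u"
  then have "u \<in> U" by (simp add: is_maximiser_on_def)
  note deriv = has_real_derivative_D[OF \<open>u \<in> U\<close>]
  have "D u \<le> 0"
  proof (cases I)
    case (real r)
    show ?thesis
    proof (cases "u = r")
      case False
      then have "u < r" using \<open>u \<in> U\<close> real by simp
      then show ?thesis
        using is_maximiser_on_deriv_nonpos[OF max convex_retention_set deriv, of r] real I_pos by simp
    qed (simp add: Dcap[OF real] less_imp_le)
  next
    case PInf
    then show ?thesis
      using is_maximiser_on_deriv_nonpos[OF max convex_retention_set deriv, of "u + 1"] \<open>u \<in> U\<close>
      by simp
  qed (use I_pos in simp)
  moreover have "0 \<le> D u"
  proof (cases "u = 0")
    case False
    then have "0 < u" using retention_set_nonneg[OF \<open>u \<in> U\<close>] by simp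
    then show ?thesis
      using is_maximiser_on_deriv_nonneg[OF max convex_retention_set deriv, of 0]
        zero_in_retention_set I_pos by simp
  qed (use D0 in simp)
  ultimately show "u \<in> U \<and> D u = 0" using \<open>u \<in> U\<close> by simp
qed

end

lemma sahara_A_pos: "0 < \<alpha> \<Longrightarrow> 0 < b \<Longrightarrow> 0 < sahara_A \<alpha> b d x"
  unfolding sahara_A_def by (intro divide_pos_pos) (auto intro!: add_pos_nonneg)

lemma Psi_has_real_derivative:
  assumes "A x \<noteq> 0" and "\<sigma>\<^sub>2 t y \<noteq> 0"
    and "(m t y has_real_derivative m') (at u within S)"
    and "(\<sigma> t y has_real_derivative \<sigma>') (at u within S)"
  shows "(Psi m \<sigma> \<mu> \<sigma>\<^sub>2 A t x y has_real_derivative m' - A x * \<sigma> t y u * \<sigma>') (at u within S)"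
proof -
  have "m' - A x * \<sigma> t y u * \<sigma>' =
      m' + (0 - 2 * \<sigma> t y u * \<sigma>' * (\<sigma>\<^sub>2 t y)\<^sup>2 * (A x)\<^sup>2) / (2 * (\<sigma>\<^sub>2 t y)\<^sup>2 * A x)"
    using assms(1,2) by (simp add: field_simps power2_eq_square)
  then show ?thesis
    unfolding Psi_def[abs_def] using assms
    by (auto intro!: derivative_eq_intros)
qed

lemma concave_retention_problem_Psi:
  assumes "0 < I" and "A x \<noteq> 0" and "\<sigma>\<^sub>2 t y \<noteq> 0"
    and m_deriv: "\<And>u. u \<in> retention_set I \<Longrightarrow>
      (m t y has_real_derivative m' u) (at u within retention_set I)"
    and \<sigma>_deriv: "\<And>u. u \<in> retention_set I \<Longrightarrow>
      (\<sigma> t y has_real_derivative \<sigma>' u) (at u within retention_set I)"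
    and "continuous_on (retention_set I) m'" and "continuous_on (retention_set I) \<sigma>'"
    and "strictly_concave_on (retention_set I) (Psi m \<sigma> \<mu> \<sigma>\<^sub>2 A t x y)"
  shows "concave_retention_problem I (Psi m \<sigma> \<mu> \<sigma>\<^sub>2 A t x y) (\<lambda>u. m' u - A x * \<sigma> t y u * \<sigma>' u)"
proof
  show "(Psi m \<sigma> \<mu> \<sigma>\<^sub>2 A t x y has_real_derivative m' u - A x * \<sigma> t y u * \<sigma>' u)
      (at u within retention_set I)" if "u \<in> retention_set I" for u
    using Psi_has_real_derivative assms(2,3) m_deriv[OF that] \<sigma>_deriv[OF that] .
  have "continuous_on (retention_set I) (\<sigma> t y)"
    using \<sigma>_deriv by (meson DERIV_continuous continuous_on_eq_continuous_within)
  then show "continuous_on (retention_set I) (\<lambda>u. m' u - A x * \<sigma> t y u * \<sigma>' u)"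
    using assms(6,7) by (intro continuous_intros)
qed (use assms in simp_all)

theorem proposition5p6:
  fixes m \<sigma> m_u \<sigma>_u :: "real \<Rightarrow> real \<Rightarrow> real \<Rightarrow> real"
    and \<mu> \<sigma>\<^sub>2 :: "real \<Rightarrow> real \<Rightarrow> real"
    and I :: ereal and \<alpha> b d T t x y :: real
  defines "U \<equiv> retention_set I"
    and "A \<equiv> sahara_A \<alpha> b d"
  assumes I_pos: "0 < I"
    and \<alpha>_pos: "\<alpha> > 0" and b_pos: "b > 0"
    and t_range: "0 \<le> t" "t \<le> T"
    and \<sigma>\<^sub>2_pos: "\<And>s z. \<sigma>\<^sub>2 s z > 0"
    and m_deriv: "\<And>u. u \<in> U \<Longrightarrow> ((m t y) has_real_derivative m_u t y u) (at u within U)"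
    and \<sigma>_deriv: "\<And>u. u \<in> U \<Longrightarrow> ((\<sigma> t y) has_real_derivative \<sigma>_u t y u) (at u within U)"
    and m_u_cont: "continuous_on U (m_u t y)"
    and \<sigma>_u_cont: "continuous_on U (\<sigma>_u t y)"
    and concave: "strictly_concave_on U (Psi m \<sigma> \<mu> \<sigma>\<^sub>2 A t x y)"
  shows
    "let \<Psi> = Psi m \<sigma> \<mu> \<sigma>\<^sub>2 A t x y;
         FOC = (\<lambda>u. m_u t y u = A x * \<sigma> t y u * \<sigma>_u t y u);
         inA0 = (m_u t y 0 \<le> A x * \<sigma> t y 0 * \<sigma>_u t y 0);
         inAI = (I \<noteq> \<infinity> \<and>
                 m_u t y (real_of_ereal I) \<ge> A x * \<sigma> t y (real_of_ereal I) * \<sigma>_u t y (real_of_ereal I))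
     in (inA0 \<longrightarrow> (\<forall>u. is_maximiser_on U \<Psi> u \<longleftrightarrow> u = 0))
      \<and> (inAI \<longrightarrow> (\<forall>u. is_maximiser_on U \<Psi> u \<longleftrightarrow> u = real_of_ereal I))
      \<and> (\<not> inA0 \<and> \<not> inAI \<longrightarrow>
           (\<forall>u1\<in>U. \<forall>u2\<in>U. FOC u1 \<and> FOC u2 \<longrightarrow> u1 = u2)
         \<and> (I \<noteq> \<infinity> \<longrightarrow> (\<exists>u\<in>U. FOC u))
         \<and> (\<forall>u. is_maximiser_on U \<Psi> u \<longleftrightarrow> u \<in> U \<and> FOC u))"
proof -
  define D where "D = (\<lambda>u. m_u t y u - A x * \<sigma> t y u * \<sigma>_u t y u)"
  have "0 < A x" unfolding A_def using sahara_A_pos \<alpha>_pos b_pos .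
  interpret concave_retention_problem I "Psi m \<sigma> \<mu> \<sigma>\<^sub>2 A t x y" D
    unfolding D_def using I_pos \<open>0 < A x\<close> \<sigma>\<^sub>2_pos[of t y] m_deriv \<sigma>_deriv m_u_cont \<sigma>_u_cont concave
    by (intro concave_retention_problem_Psi) (simp_all add: U_def)
  have finite_cap: "I = ereal (real_of_ereal I)" if "I \<noteq> \<infinity>"
    using that I_pos by (cases I) auto
  have FOC_iff: "m_u t y u = A x * \<sigma> t y u * \<sigma>_u t y u \<longleftrightarrow> D u = 0"
    and A0_iff: "m_u t y u \<le> A x * \<sigma> t y u * \<sigma>_u t y u \<longleftrightarrow> D u \<le> 0"
    and AI_iff: "A x * \<sigma> t y u * \<sigma>_u t y u \<le> m_u t y u \<longleftrightarrow> 0 \<le> D u" for u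
    by (simp_all add: D_def)
  let ?\<Psi> = "Psi m \<sigma> \<mu> \<sigma>\<^sub>2 A t x y"
  show ?thesis
    unfolding Let_def FOC_iff A0_iff AI_iff U_def
  proof (intro conjI impI)
    show "\<forall>u. is_maximiser_on (retention_set I) ?\<Psi> u \<longleftrightarrow> u = 0" if "D 0 \<le> 0"
      using maximiser_zero_iff[OF that] by blast
    show "\<forall>u. is_maximiser_on (retention_set I) ?\<Psi> u \<longleftrightarrow> u = real_of_ereal I"
      if "I \<noteq> \<infinity> \<and> 0 \<le> D (real_of_ereal I)"
      using maximiser_cap_iff[OF finite_cap] that by blast
    assume "\<not> D 0 \<le> 0 \<and> \<not> (I \<noteq> \<infinity> \<and> 0 \<le> D (real_of_ereal I))"
    then have "0 < D 0" and D_cap: "\<And>r. I = ereal r \<Longrightarrow> D r < 0" by auto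
    show "\<forall>u\<^sub>1\<in>retention_set I. \<forall>u\<^sub>2\<in>retention_set I. D u\<^sub>1 = 0 \<and> D u\<^sub>2 = 0 \<longrightarrow> u\<^sub>1 = u\<^sub>2"
      using stationary_unique by blast
    show "I \<noteq> \<infinity> \<Longrightarrow> \<exists>u\<in>retention_set I. D u = 0"
      using stationary_exists[OF finite_cap \<open>0 < D 0\<close> D_cap[OF finite_cap]] .
    show "\<forall>u. is_maximiser_on (retention_set I) ?\<Psi> u \<longleftrightarrow> u \<in> retention_set I \<and> D u = 0"
      using maximiser_iff_stationary[OF \<open>0 < D 0\<close> D_cap] by blast
  qed
qed

end
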